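(* Let $\mathbf{S} = [s_{ij}] \in \mathbb{R}^{m_q \times m}$ be the similarity matrix between a query vector set $\mathbf{Q}=\{\mathbf{q}_1,\dots,\mathbf{q}_{m_q}\}$ and a target vector set $\mathbf{T}=\{\mathbf{t}_1,\dots,\mathbf{t}_m\}$, with entries $s_{ij}\in[0,1]$, and let $s_{\max} = \max_{i,j} s_{ij}$. Let $\hat{\mathbf{S}} = [\hat S_{ij}]$ be the estimated similarity matrix obtained from $L \in \mathbb{Z}^+$ hash functions of a locality-sensitive hashing family (so that each estimated entry $\hat S_{ij}$ is distributed as $L^{-1}\mathcal{B}(s_{ij}, L)$, i.e. $L\hat S_{ij}$ is binomial with $L$ trials and success probability $s_{ij}$). Let $\tau_1 \in (s_{\max}, 1)$ and $\Delta_1 = \tau_1 - s_{\max}$. Then $$\Pr\big[\sigma(\hat{\mathbf{S}}) \geq s_{\max} + \Delta_1\big] \leq m_q m\, \gamma^L, \qquad \text{where } \gamma = \left(\frac{s_{\max}(1-\tau_1)}{\tau_1(1-s_{\max})}\right)^{\tau_1}\left(\frac{1-s_{\max}}{1-\tau_1}\right),$$ and $\sigma(\mathbf{A}) = \min\big(\min_i \max_j a_{ij}, \min_j \max_i a_{ij}\big)$ for a matrix $\mathbf{A}=[a_{ij}] \in \mathbb{R}^{m_q\times m}$.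
   Context: A locality-sensitive hash function $h$ satisfies $\Pr(h(\mathbf{a})=h(\mathbf{b})) = \operatorname{sim}(\mathbf{a},\mathbf{b}) \in [0,1]$. With $L$ such hash functions, the estimated similarity of a pair of vectors is the fraction of the $L$ hash functions on which they collide, hence a scaled binomial $L^{-1}\mathcal{B}(\operatorname{sim}, L)$. Vectors are $L2$-normalized and $\operatorname{sim}(\mathbf{q},\mathbf{v}) = \mathbf{q}^T\mathbf{v}$. *)

theory Defs
  imports "HOL-Probability.Probability"
begin

text \<open>Matrices of size mq x m are represented as functions nat => nat => real,
  with row index i < mq and column index j < m.\<close>

definition mat_max :: "nat \<Rightarrow> nat \<Rightarrow> (nat \<Rightarrow> nat \<Rightarrow> real) \<Rightarrow> real" where
  "mat_max mq m A = Max {A i j | i j. i < mq \<and> j < m}"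

definition sigma_mat :: "nat \<Rightarrow> nat \<Rightarrow> (nat \<Rightarrow> nat \<Rightarrow> real) \<Rightarrow> real" where
  "sigma_mat mq m A =
     min (Min ((\<lambda>i. Max ((\<lambda>j. A i j) ` {..<m})) ` {..<mq}))
         (Min ((\<lambda>j. Max ((\<lambda>i. A i j) ` {..<mq})) ` {..<m}))"

end

theory Submission imports Defs begin

text \<open>If \<open>\<sigma>(Shat) \<ge> \<tau>\<^sub>1\<close>, then in particular the first row of \<open>Shat\<close> has an entry
  \<open>\<ge> \<tau>\<^sub>1\<close>, so a union bound over the \<open>m\<close> entries of that row suffices. Each entry is a scaled binomial whose success
  probability is at most \<open>s\<^sub>m\<^sub>a\<^sub>x\<close>; the Chernoff bound obtained from Markov's inequality for
  \<open>r\<^sup>k\<close> with \<open>r = \<tau>\<^sub>1(1 - s\<^sub>m\<^sub>a\<^sub>x) / (s\<^sub>m\<^sub>a\<^sub>x(1 - \<tau>\<^sub>1))\<close> gives exactly \<open>\<gamma>\<^sup>L\<close> per entry.\<close>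

lemma mat_max_ge:
  assumes "i < mq" "j < m"
  shows "A i j \<le> mat_max mq m A"
proof -
  have "{A i j | i j. i < mq \<and> j < m} = (\<lambda>(i, j). A i j) ` ({..<mq} \<times> {..<m})"
    by auto
  then show ?thesis
    unfolding mat_max_def using assms by (intro Max_ge) auto
qed

lemma sigma_mat_ge_imp_row_entry_ge:
  assumes "i < mq" "0 < m" "t \<le> sigma_mat mq m A"
  shows "\<exists>j<m. t \<le> A i j"
proof -
  have "t \<le> Min ((\<lambda>i. Max ((\<lambda>j. A i j) ` {..<m})) ` {..<mq})"
    using assms(3) unfolding sigma_mat_def by simp
  also have "\<dots> \<le> Max ((\<lambda>j. A i j) ` {..<m})"
    using assms(1) by (intro Min_le) auto
  finally show ?thesis
    using assms(2) by (subst (asm) Max_ge_iff) auto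
qed

lemma binomial_tail_le_mgf:
  fixes a r :: real
  assumes p: "0 \<le> p" "p \<le> 1" and r: "1 \<le> r"
  shows "measure_pmf.prob (binomial_pmf L p) {k. a \<le> real k} \<le> (1 - p + p * r) ^ L / r powr a"
proof -
  let ?P = "binomial_pmf L p"
  let ?A = "{k. a \<le> real k}"
  have "measure_pmf.prob ?P ?A = measure_pmf.prob ?P (?A \<inter> {..L})"
    using p by (intro measure_prob_cong_0) (auto simp: set_pmf_binomial_eq)
  also have "\<dots> = (\<Sum>k\<in>?A \<inter> {..L}. pmf ?P k)"
    by (rule measure_measure_pmf_finite) auto
  also have "\<dots> \<le> (\<Sum>k\<in>?A \<inter> {..L}. pmf ?P k * r powr (real k - a))"
    using r by (intro sum_mono) (auto simp: mult_le_cancel_left1 intro!: ge_one_powr_ge_zero)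
  also have "\<dots> \<le> (\<Sum>k\<le>L. pmf ?P k * r powr (real k - a))"
    by (rule sum_mono2) auto
  also have "\<dots> = (\<Sum>k\<le>L. (L choose k) * (p * r) ^ k * (1 - p) ^ (L - k)) / r powr a"
    using p r unfolding sum_divide_distrib
    by (intro sum.cong refl) (simp add: powr_diff powr_realpow power_mult_distrib)
  also have "(\<Sum>k\<le>L. (L choose k) * (p * r) ^ k * (1 - p) ^ (L - k)) = (1 - p + p * r) ^ L"
    by (subst add.commute) (rule binomial_ring[symmetric])
  finally show ?thesis .
qed

lemma binomial_tail_chernoff:
  fixes t q :: real
  assumes "0 \<le> p" "p \<le> q" "q < t" "t < 1"
  shows "measure_pmf.prob (binomial_pmf L p) {k. real L * t \<le> real k}
    \<le> ((q * (1 - t) / (t * (1 - q))) powr t * ((1 - q) / (1 - t))) ^ L"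
proof (cases "q = 0")
  case True
  then have p: "p = 0" using assms by simp
  show ?thesis
  proof (cases L)
    case 0
    then show ?thesis by simp
  next
    case (Suc n)
    then have "{k. real L * t \<le> real k} \<inter> set_pmf (binomial_pmf L p) = {}"
      using p assms True by (auto simp: set_pmf_binomial_0 mult_le_0_iff)
    then show ?thesis
      using True Suc by (simp flip: measure_Int_set_pmf)
  qed
next
  case False
  define r where "r = t * (1 - q) / (q * (1 - t))"
  have q: "0 < q" "q < 1" using False assms by auto
  have r: "1 \<le> r"
    unfolding r_def using assms q by (simp add: field_simps mult_mono)
  have "measure_pmf.prob (binomial_pmf L p) {k. real L * t \<le> real k}
      \<le> (1 - p + p * r) ^ L / r powr (real L * t)"
    using assms q by (intro binomial_tail_le_mgf r) auto
  also have "\<dots> \<le> (1 - q + q * r) ^ L / r powr (real L * t)"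
  proof (intro divide_right_mono power_mono)
    show "1 - p + p * r \<le> 1 - q + q * r"
      using assms r mult_right_mono[of p q "r - 1"] by (simp add: algebra_simps)
    show "0 \<le> 1 - p + p * r"
      using assms q r mult_mono[of p 1 1 r] by simp
  qed simp
  also have "\<dots> = ((1 - q + q * r) / r powr t) ^ L"
    using r by (simp add: power_divide powr_powr[symmetric] powr_realpow mult.commute)
  also have "(1 - q + q * r) / r powr t = (q * (1 - t) / (t * (1 - q))) powr t * ((1 - q) / (1 - t))"
  proof -
    have "1 - q + q * r = (1 - q) / (1 - t)"
      unfolding r_def using assms q by (simp add: field_simps)
    moreover have "1 / r powr t = (q * (1 - t) / (t * (1 - q))) powr t"
      unfolding r_def using assms q by (simp add: powr_divide)
    ultimately show ?thesis
      by (metis times_divide_eq_left mult_1 mult.commute)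
  qed
  finally show ?thesis .
qed

lemma measure_ge_eq_binomial_tail:
  fixes X :: "'a \<Rightarrow> real"
  assumes X: "X \<in> borel_measurable M" and L: "0 < L"
    and distr: "distr M borel (\<lambda>\<omega>. real L * X \<omega>) = distr (measure_pmf (binomial_pmf L p)) borel real"
  shows "measure M {\<omega> \<in> space M. t \<le> X \<omega>} = measure_pmf.prob (binomial_pmf L p) {k. real L * t \<le> real k}"
proof -
  have "{\<omega> \<in> space M. t \<le> X \<omega>} = (\<lambda>\<omega>. real L * X \<omega>) -` {x. real L * t \<le> x} \<inter> space M"
    using L by auto
  also have "measure M \<dots> = measure (distr M borel (\<lambda>\<omega>. real L * X \<omega>)) {x. real L * t \<le> x}"
    using X by (intro measure_distr[symmetric]) auto
  also have "\<dots> = measure_pmf.prob (binomial_pmf L p) (real -` {x. real L * t \<le> x} \<inter> UNIV)"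
    unfolding distr by (subst measure_distr) auto
  finally show ?thesis by simp
qed

theorem lemma2:
  fixes M :: "'a measure"
    and mq m L :: nat
    and s :: "nat \<Rightarrow> nat \<Rightarrow> real"
    and Shat :: "nat \<Rightarrow> nat \<Rightarrow> 'a \<Rightarrow> real"
    and \<tau>1 \<Delta>1 :: real
  assumes "prob_space M"
    and "mq \<ge> 1" and "m \<ge> 1" and "L \<ge> 1"
    and s_range: "\<And>i j. i < mq \<Longrightarrow> j < m \<Longrightarrow> s i j \<in> {0..1}"
    and meas: "\<And>i j. i < mq \<Longrightarrow> j < m \<Longrightarrow> Shat i j \<in> borel_measurable M"
    and distr: "\<And>i j. i < mq \<Longrightarrow> j < m \<Longrightarrow>
        distr M borel (\<lambda>\<omega>. real L * Shat i j \<omega>)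
        = distr (measure_pmf (binomial_pmf L (s i j))) borel real"
    and tau: "mat_max mq m s < \<tau>1" "\<tau>1 < 1"
    and Delta: "\<Delta>1 = \<tau>1 - mat_max mq m s"
  shows "measure M {\<omega> \<in> space M. sigma_mat mq m (\<lambda>i j. Shat i j \<omega>) \<ge> mat_max mq m s + \<Delta>1}
      \<le> real mq * real m *
         ((mat_max mq m s * (1 - \<tau>1) / (\<tau>1 * (1 - mat_max mq m s))) powr \<tau>1
          * ((1 - mat_max mq m s) / (1 - \<tau>1))) ^ L"
proof -
  interpret prob_space M by fact
  define \<gamma> where "\<gamma> = ((mat_max mq m s * (1 - \<tau>1) / (\<tau>1 * (1 - mat_max mq m s))) powr \<tau>1
    * ((1 - mat_max mq m s) / (1 - \<tau>1))) ^ L"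
  have mq: "0 < mq" and m: "0 < m" using assms(2,3) by auto
  have \<gamma>_nonneg: "0 \<le> \<gamma>"
    unfolding \<gamma>_def using tau by simp
  have entry_tail: "measure M {\<omega> \<in> space M. \<tau>1 \<le> Shat 0 j \<omega>} \<le> \<gamma>" if j: "j < m" for j
  proof -
    have "measure M {\<omega> \<in> space M. \<tau>1 \<le> Shat 0 j \<omega>}
        = measure_pmf.prob (binomial_pmf L (s 0 j)) {k. real L * \<tau>1 \<le> real k}"
      using assms(4) by (intro measure_ge_eq_binomial_tail meas distr mq j) auto
    also have "\<dots> \<le> \<gamma>"
      unfolding \<gamma>_def using s_range[OF mq j] mat_max_ge[OF mq j, of s] tau
      by (intro binomial_tail_chernoff) auto
    finally show ?thesis .
  qed
  have "{\<omega> \<in> space M. sigma_mat mq m (\<lambda>i j. Shat i j \<omega>) \<ge> mat_max mq m s + \<Delta>1}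
      \<subseteq> (\<Union>j<m. {\<omega> \<in> space M. \<tau>1 \<le> Shat 0 j \<omega>})"
    using sigma_mat_ge_imp_row_entry_ge[OF mq m] Delta by fastforce
  then have "measure M {\<omega> \<in> space M. sigma_mat mq m (\<lambda>i j. Shat i j \<omega>) \<ge> mat_max mq m s + \<Delta>1}
      \<le> measure M (\<Union>j<m. {\<omega> \<in> space M. \<tau>1 \<le> Shat 0 j \<omega>})"
    using mq meas by (intro finite_measure_mono) auto
  also have "\<dots> \<le> (\<Sum>j<m. measure M {\<omega> \<in> space M. \<tau>1 \<le> Shat 0 j \<omega>})"
    using mq meas by (intro finite_measure_subadditive_finite) auto
  also have "\<dots> \<le> real m * \<gamma>"
    using sum_mono[of "{..<m}", OF entry_tail] by simp
  also have "\<dots> \<le> real mq * real m * \<gamma>"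
    using mult_right_mono[of 1 "real mq" "real m * \<gamma>"] assms(2) \<gamma>_nonneg by (simp add: mult.assoc)
  finally show ?thesis unfolding \<gamma>_def .
qed

end
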